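(* Fix $\bar\alpha\in(0,1)$. For every $k\ge1$ and every $\alpha_1,\dots,\alpha_k\in[0,1]$ with $\max_\ell\alpha_\ell=\bar\alpha$, the accountability weights $w_j=(\prod_{\ell=1}^{j}\alpha_\ell)(1-\alpha_{j+1})$ for $j<k$ and $w_k=\prod_{\ell=1}^k\alpha_\ell$ satisfy $\max_j w_j\le 1-(1-\bar\alpha)^k<1$, and the bound $1-(1-\bar\alpha)^k$ converges to $1$ from below as $k\to\infty$.
   Context: The $\alpha_\ell$ are delegation degrees along a delegation chain of length $k$, and $w_j$ is the accountability weight of the $j$-th agent. *)

theory Defs
  imports Complex_Main
begin

definition acc_weight :: "(nat \<Rightarrow> real) \<Rightarrow> nat \<Rightarrow> nat \<Rightarrow> real" where
  "acc_weight \<alpha> k j =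
     (if j < k then (\<Prod>l=1..j. \<alpha> l) * (1 - \<alpha> (Suc j)) else (\<Prod>l=1..k. \<alpha> l))"

end

theory Submission
  imports Defs
begin

text \<open>Every weight is at most the product of the first j degrees, hence at most the first
  degree, hence at most the maximal degree; and a degree below 1 is dominated by
  1 - (1 - degree)^k because (1 - degree)^k \<le> 1 - degree.\<close>

lemma prod_le_factor_unit_interval:
  fixes f :: "'a \<Rightarrow> real"
  assumes "finite A" "i \<in> A" "\<forall>l\<in>A. 0 \<le> f l \<and> f l \<le> 1"
  shows "prod f A \<le> f i"
proof -
  have "prod f A = f i * prod f (A - {i})"
    using assms(1,2) by (rule prod.remove)
  also have "\<dots> \<le> f i"
    using assms by (intro mult_left_le prod_le_1) auto
  finally show ?thesis .
qed

lemma acc_weight_le_prod: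
  assumes "j \<le> k" "\<forall>l\<in>{1..k}. 0 \<le> \<alpha> l \<and> \<alpha> l \<le> 1"
  shows "acc_weight \<alpha> k j \<le> (\<Prod>l=1..j. \<alpha> l)"
proof (cases "j < k")
  case True
  have "0 \<le> (\<Prod>l=1..j. \<alpha> l)" using assms by (intro prod_nonneg) auto
  moreover have "0 \<le> 1 - \<alpha> (Suc j)" "1 - \<alpha> (Suc j) \<le> 1" using assms True by auto
  ultimately show ?thesis using True by (simp add: acc_weight_def mult_left_le)
next
  case False
  with assms(1) show ?thesis by (simp add: acc_weight_def)
qed

lemma Max_acc_weight_le_Max_degree:
  assumes "k \<ge> 1" "\<forall>l\<in>{1..k}. 0 \<le> \<alpha> l \<and> \<alpha> l \<le> 1"
  shows "Max (acc_weight \<alpha> k ` {1..k}) \<le> Max (\<alpha> ` {1..k})"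
proof -
  have "acc_weight \<alpha> k j \<le> Max (\<alpha> ` {1..k})" if j: "j \<in> {1..k}" for j
  proof -
    have "acc_weight \<alpha> k j \<le> (\<Prod>l=1..j. \<alpha> l)"
      using j assms(2) by (intro acc_weight_le_prod) auto
    also have "\<dots> \<le> \<alpha> 1"
      using j assms(2) by (intro prod_le_factor_unit_interval) auto
    also have "\<dots> \<le> Max (\<alpha> ` {1..k})"
      using assms(1) by (intro Max_ge) auto
    finally show ?thesis .
  qed
  with assms(1) show ?thesis by (subst Max_le_iff) auto
qed

lemma le_one_minus_power_one_minus:
  fixes a :: real
  assumes "0 \<le> a" "a \<le> 1" "k \<ge> 1"
  shows "a \<le> 1 - (1 - a) ^ k"
  using power_decreasing[of 1 k "1 - a"] assms by simp

lemma one_minus_power_tendsto_at_left_one: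
  fixes q :: real
  assumes "0 < q" "q < 1"
  shows "filterlim (\<lambda>k::nat. 1 - q ^ k) (at_left 1) sequentially"
proof (rule tendsto_imp_filterlim_at_left)
  show "(\<lambda>k. 1 - q ^ k) \<longlonglongrightarrow> 1"
    using tendsto_diff[OF tendsto_const LIMSEQ_realpow_zero[of q]] assms by simp
  show "\<forall>\<^sub>F k in sequentially. 1 - q ^ k < 1"
    using assms by (intro always_eventually) simp
qed

theorem corollary2:
  fixes abar :: real
  assumes "0 < abar" and "abar < 1"
  shows "(\<forall>k::nat. \<forall>\<alpha>::nat \<Rightarrow> real. k \<ge> 1 \<longrightarrow> (\<forall>l\<in>{1..k}. 0 \<le> \<alpha> l \<and> \<alpha> l \<le> 1)
            \<longrightarrow> Max (\<alpha> ` {1..k}) = abar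
            \<longrightarrow> Max (acc_weight \<alpha> k ` {1..k}) \<le> 1 - (1 - abar) ^ k
                \<and> 1 - (1 - abar) ^ k < 1)
         \<and> filterlim (\<lambda>k::nat. 1 - (1 - abar) ^ k) (at_left 1) sequentially"
proof (intro conjI allI impI)
  fix k :: nat and \<alpha> :: "nat \<Rightarrow> real"
  assume k: "k \<ge> 1" and unit: "\<forall>l\<in>{1..k}. 0 \<le> \<alpha> l \<and> \<alpha> l \<le> 1"
    and max: "Max (\<alpha> ` {1..k}) = abar"
  have "Max (acc_weight \<alpha> k ` {1..k}) \<le> abar"
    using Max_acc_weight_le_Max_degree[OF k unit] max by simp
  also have "abar \<le> 1 - (1 - abar) ^ k"
    using assms k by (intro le_one_minus_power_one_minus) auto
  finally show "Max (acc_weight \<alpha> k ` {1..k}) \<le> 1 - (1 - abar) ^ k" .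
  show "1 - (1 - abar) ^ k < 1"
    using assms by simp
next
  show "filterlim (\<lambda>k::nat. 1 - (1 - abar) ^ k) (at_left 1) sequentially"
    using assms by (intro one_minus_power_tendsto_at_left_one) auto
qed

end
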